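(* Let $(A,\triangleright,\triangleleft,\alpha)$ be a Hom-$L$-dendriform algebra. Define $x\triangleright^t y:=x\triangleright y$ and $x\triangleleft^t y:=-y\triangleleft x$. Then $(A,\triangleright^t,\triangleleft^t,\alpha)$ is a Hom-$L$-dendriform algebra. Moreover, writing $x\cdot y=x\triangleright y+x\triangleleft y$, $x\ast y=x\triangleright y-y\triangleleft x$ and $\cdot^t,\ast^t$ for the analogous operations built from $\triangleright^t,\triangleleft^t$, one has $\cdot^t=\ast$ and $\ast^t=\cdot$.
   Context: A Hom-$L$-dendriform algebra is a vector space $A$ with bilinear maps $\triangleleft,\triangleright:A\otimes A\to A$ and a linear map $\alpha:A\to A$ such that for all $x,y,z\in A$: $\alpha(x)\triangleright(y\triangleright z)=(x\triangleright y)\triangleright\alpha(z)+(x\triangleleft y)\triangleright\alpha(z)+\alpha(y)\triangleright(x\triangleright z)-(y\triangleleft x)\triangleright\alpha(z)-(y\triangleright x)\triangleright\alpha(z)$ and $\alpha(x)\triangleright(y\triangleleft z)=(x\triangleright y)\triangleleft\alpha(z)+\alpha(y)\triangleleft(x\triangleright z)+\alpha(y)\triangleleft(x\triangleleft z)-(y\triangleleft x)\triangleleft\alpha(z)$. *)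

theory Defs
  imports Main "HOL.Vector_Spaces"
begin

text \<open>A vector space A over a field 'k is given by a scalar multiplication
  scale :: 'k \<Rightarrow> 'a \<Rightarrow> 'a satisfying the vector_space axioms (HOL Vector_Spaces).
  r = right operation (triangleright), l = left operation (triangleleft).\<close>

definition bilinear_map :: "('k::field \<Rightarrow> 'a::ab_group_add \<Rightarrow> 'a) \<Rightarrow> ('a \<Rightarrow> 'a \<Rightarrow> 'a) \<Rightarrow> bool" where
  "bilinear_map scale m \<longleftrightarrow>
     (\<forall>x. Vector_Spaces.linear scale scale (\<lambda>y. m x y)) \<and>
     (\<forall>y. Vector_Spaces.linear scale scale (\<lambda>x. m x y))"

definition hom_L_dendriform ::
  "('k::field \<Rightarrow> 'a::ab_group_add \<Rightarrow> 'a) \<Rightarrow> ('a \<Rightarrow> 'a \<Rightarrow> 'a) \<Rightarrow> ('a \<Rightarrow> 'a \<Rightarrow> 'a) \<Rightarrow> ('a \<Rightarrow> 'a) \<Rightarrow> bool" where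
  "hom_L_dendriform scale r l \<alpha> \<longleftrightarrow>
     vector_space scale \<and> bilinear_map scale r \<and> bilinear_map scale l \<and>
     Vector_Spaces.linear scale scale \<alpha> \<and>
     (\<forall>x y z. r (\<alpha> x) (r y z) =
        r (r x y) (\<alpha> z) + r (l x y) (\<alpha> z) + r (\<alpha> y) (r x z)
        - r (l y x) (\<alpha> z) - r (r y x) (\<alpha> z)) \<and>
     (\<forall>x y z. r (\<alpha> x) (l y z) =
        l (r x y) (\<alpha> z) + l (\<alpha> y) (r x z) + l (\<alpha> y) (l x z)
        - l (l y x) (\<alpha> z))"

definition dot_op :: "('a::ab_group_add \<Rightarrow> 'a \<Rightarrow> 'a) \<Rightarrow> ('a \<Rightarrow> 'a \<Rightarrow> 'a) \<Rightarrow> 'a \<Rightarrow> 'a \<Rightarrow> 'a" where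
  "dot_op r l x y = r x y + l x y"

definition star_op :: "('a::ab_group_add \<Rightarrow> 'a \<Rightarrow> 'a) \<Rightarrow> ('a \<Rightarrow> 'a \<Rightarrow> 'a) \<Rightarrow> 'a \<Rightarrow> 'a \<Rightarrow> 'a" where
  "star_op r l x y = r x y - l y x"

definition right_t :: "('a \<Rightarrow> 'a \<Rightarrow> 'a) \<Rightarrow> 'a \<Rightarrow> 'a \<Rightarrow> 'a" where
  "right_t r x y = r x y"

definition left_t :: "('a::ab_group_add \<Rightarrow> 'a \<Rightarrow> 'a) \<Rightarrow> 'a \<Rightarrow> 'a \<Rightarrow> 'a" where
  "left_t l x y = - l y x"

end

theory Submission
  imports Defs
begin

text \<open>Transposition leaves the right product unchanged and only replaces the left product
  by its negated opposite. Substituting this into the two Hom-L-dendriform identities, the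
  first one becomes the original first identity (the two terms involving the left product
  merely trade places), and the second one becomes the negative of the original second
  identity with the last two variables swapped.\<close>

lemma linear_minus_apply:
  assumes "Vector_Spaces.linear s1 s2 f"
  shows "f (- x) = - f x"
  using assms by (metis module_hom.neg module_hom_iff_linear)

lemma bilinear_map_minus_left:
  assumes "bilinear_map s m"
  shows "m (- x) y = - m x y"
  using assms linear_minus_apply[of s s "\<lambda>x. m x y"] by (simp add: bilinear_map_def)

lemma bilinear_map_minus_right:
  assumes "bilinear_map s m"
  shows "m x (- y) = - m x y"
  using assms linear_minus_apply[of s s "m x"] by (simp add: bilinear_map_def)

lemma right_t_eq [simp]: "right_t r = r"
  by (simp add: fun_eq_iff right_t_def)

lemma linear_uminus_compose:
  assumes "Vector_Spaces.linear s s f"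
  shows "Vector_Spaces.linear s s (\<lambda>x. - f x)"
proof -
  have "vector_space s"
    using assms by (simp add: linear_iff)
  then have "Vector_Spaces.linear s s uminus"
    by (rule vector_space.linear_uminus)
  with assms show ?thesis
    using Vector_Spaces.linear_compose[of s s f s uminus] by (simp add: comp_def)
qed

lemma bilinear_map_left_t:
  assumes "bilinear_map s l"
  shows "bilinear_map s (left_t l)"
  using assms linear_uminus_compose unfolding bilinear_map_def left_t_def by blast

lemma first_identity_left_t:
  assumes "bilinear_map s r"
    and "\<forall>x y z. r (\<alpha> x) (r y z) =
        r (r x y) (\<alpha> z) + r (l x y) (\<alpha> z) + r (\<alpha> y) (r x z)
        - r (l y x) (\<alpha> z) - r (r y x) (\<alpha> z)"
  shows "\<forall>x y z. r (\<alpha> x) (r y z) =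
        r (r x y) (\<alpha> z) + r (left_t l x y) (\<alpha> z) + r (\<alpha> y) (r x z)
        - r (left_t l y x) (\<alpha> z) - r (r y x) (\<alpha> z)"
  using assms by (simp add: left_t_def bilinear_map_minus_left algebra_simps)

lemma second_identity_left_t:
  assumes "bilinear_map s r" and "bilinear_map s l"
    and "\<forall>x y z. r (\<alpha> x) (l y z) =
        l (r x y) (\<alpha> z) + l (\<alpha> y) (r x z) + l (\<alpha> y) (l x z)
        - l (l y x) (\<alpha> z)"
  shows "\<forall>x y z. r (\<alpha> x) (left_t l y z) =
        left_t l (r x y) (\<alpha> z) + left_t l (\<alpha> y) (r x z) + left_t l (\<alpha> y) (left_t l x z)
        - left_t l (left_t l y x) (\<alpha> z)"
proof (intro allI)
  fix x y z
  have "r (\<alpha> x) (l z y) =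
      l (r x z) (\<alpha> y) + l (\<alpha> z) (r x y) + l (\<alpha> z) (l x y) - l (l z x) (\<alpha> y)"
    using assms(3) by blast
  then show "r (\<alpha> x) (left_t l y z) =
        left_t l (r x y) (\<alpha> z) + left_t l (\<alpha> y) (r x z) + left_t l (\<alpha> y) (left_t l x z)
        - left_t l (left_t l y x) (\<alpha> z)"
    using assms(1,2)
    by (simp add: left_t_def bilinear_map_minus_left bilinear_map_minus_right algebra_simps)
qed

theorem mainTheorem13:
  fixes scale :: "'k::field \<Rightarrow> 'a::ab_group_add \<Rightarrow> 'a"
    and r l :: "'a \<Rightarrow> 'a \<Rightarrow> 'a" and \<alpha> :: "'a \<Rightarrow> 'a"
  assumes "hom_L_dendriform scale r l \<alpha>"
  shows "hom_L_dendriform scale (right_t r) (left_t l) \<alpha>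
         \<and> dot_op (right_t r) (left_t l) = star_op r l
         \<and> star_op (right_t r) (left_t l) = dot_op r l"
proof (intro conjI)
  show "hom_L_dendriform scale (right_t r) (left_t l) \<alpha>"
    using assms bilinear_map_left_t first_identity_left_t second_identity_left_t
    unfolding hom_L_dendriform_def right_t_eq by meson
  show "dot_op (right_t r) (left_t l) = star_op r l"
    by (simp add: fun_eq_iff dot_op_def star_op_def left_t_def)
  show "star_op (right_t r) (left_t l) = dot_op r l"
    by (simp add: fun_eq_iff dot_op_def star_op_def left_t_def)
qed

end
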